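(* Let $N\ge2$, let $\mathbf{K}\in\mathbb{R}^{N\times N}$ be the cyclic shift matrix ($(\mathbf{K}\mathbf{x})_1=x_N$, $(\mathbf{K}\mathbf{x})_i=x_{i-1}$ for $i\ge2$), $\mathbf{K}(\nu)=(1-\nu)\mathbf{I}+\nu\mathbf{K}$, and for $\tilde\nu\in\mathbb{R}$ let $\mathcal{K}(\tilde\nu)=\mathbf{K}^{\lfloor\tilde\nu\rfloor}\mathbf{K}(\tilde\nu-\lfloor\tilde\nu\rfloor)$ (with $\mathbf{K}^{-1}=\mathbf{K}^T$). Let $\mathbf{a},\mathbf{b}\in\mathbb{R}^N$, both not parallel to $\mathbf{1}=(1,\dots,1)^T$. Define $g:\mathbb{R}\to\mathbb{R}^N$ by $g(\tilde\nu)=\mathbf{b}-\mathcal{K}(\tilde\nu)^T\mathbf{a}$, and let $L$ be the period of $g$, i.e. the smallest $L>0$ with $g(x+L)=g(x)$ for all $x\in\mathbb{R}$. Then $$L=\frac{N}{\gcd\big[\operatorname{supp}\mathcal{F}(\mathbf{a})\setminus\{0\}\big]},$$ where $\mathcal{F}(\mathbf{a})$ is the discrete Fourier transform of $\mathbf{a}$, $\operatorname{supp}\mathcal{F}(\mathbf{a})\subseteq\{0,1,\dots,N-1\}$ is the set of frequency indices $k$ with $\mathcal{F}(\mathbf{a})_k\neq0$, and $\gcd$ denotes the greatest common divisor of that set of integers. *)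

theory Defs
  imports Complex_Main "Jordan_Normal_Form.Matrix"
begin

text \<open>Indices are 0-based: entries 0..N-1 correspond to the paper's 1..N.\<close>

definition shiftK :: "nat \<Rightarrow> real mat" where
  "shiftK N = mat N N (\<lambda>(i,j). if j = (i + N - 1) mod N then 1 else 0)"

definition Knu :: "nat \<Rightarrow> real \<Rightarrow> real mat" where
  "Knu N nu = (1 - nu) \<cdot>\<^sub>m 1\<^sub>m N + nu \<cdot>\<^sub>m shiftK N"

definition Kpow_int :: "nat \<Rightarrow> int \<Rightarrow> real mat" where
  "Kpow_int N m = (if m \<ge> 0 then shiftK N ^\<^sub>m nat m
                   else transpose_mat (shiftK N) ^\<^sub>m nat (- m))"

definition calK :: "nat \<Rightarrow> real \<Rightarrow> real mat" where
  "calK N nu = Kpow_int N \<lfloor>nu\<rfloor> * Knu N (nu - of_int \<lfloor>nu\<rfloor>)"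

definition gfun :: "nat \<Rightarrow> real vec \<Rightarrow> real vec \<Rightarrow> real \<Rightarrow> real vec" where
  "gfun N a b nu = b - transpose_mat (calK N nu) *\<^sub>v a"

definition DFT :: "nat \<Rightarrow> real vec \<Rightarrow> nat \<Rightarrow> complex" where
  "DFT N a k = (\<Sum>n<N. complex_of_real (a $ n) *
                 exp (- 2 * of_real pi * \<i> * of_nat k * of_nat n / of_nat N))"

definition supp_DFT :: "nat \<Rightarrow> real vec \<Rightarrow> nat set" where
  "supp_DFT N a = {k. k < N \<and> DFT N a k \<noteq> 0}"

definition least_period :: "(real \<Rightarrow> 'b) \<Rightarrow> real \<Rightarrow> bool" where
  "least_period g L \<longleftrightarrow> L > 0 \<and> (\<forall>x. g (x + L) = g x) \<and>
     (\<forall>L'. L' > 0 \<and> (\<forall>x. g (x + L') = g x) \<longrightarrow> L \<le> L')"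

definition parallel_to_ones :: "nat \<Rightarrow> real vec \<Rightarrow> bool" where
  "parallel_to_ones N a \<longleftrightarrow> (\<exists>c. a = c \<cdot>\<^sub>v vec N (\<lambda>_. 1))"

end

theory Submission
  imports Defs
begin

text \<open>
Identify a vector with its \<open>N\<close>-periodic extension \<open>A\<close> to the integers. Then \<open>K\<^sup>T\<close> shifts
\<open>A\<close> by one, so \<open>\<K>(x)\<^sup>T a\<close> has entries \<open>\<Phi>(i + x)\<close>, where \<open>\<Phi>\<close> is the piecewise linear
interpolation of \<open>A\<close>.
A non-integer period of \<open>\<Phi>\<close> forces all second differences of \<open>A\<close> to vanish, so a periodic
\<open>A\<close> would be constant, i.e. \<open>a\<close> parallel to \<open>1\<close>. An integer shift by \<open>p\<close> multiplies the
\<open>k\<close>-th Fourier coefficient by \<open>\<omega>\<^sup>k\<^sup>p\<close>, so by Fourier inversion \<open>p\<close> is a period of \<open>A\<close>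
iff \<open>N\<close> divides \<open>k p\<close> for every nonzero \<open>k\<close> in the support, i.e. iff \<open>N / G\<close> divides \<open>p\<close>
for \<open>G\<close> the gcd of that support (which divides \<open>N\<close>, the support being symmetric under
\<open>k \<mapsto> N - k\<close>).
\<close>

definition periodic_int :: "int \<Rightarrow> (int \<Rightarrow> 'a) \<Rightarrow> bool" where
  "periodic_int p f \<longleftrightarrow> (\<forall>j. f (j + p) = f j)"

lemma periodic_intD: "periodic_int p f \<Longrightarrow> f (j + p) = f j"
  by (simp add: periodic_int_def)

lemma periodic_int_shift: "periodic_int p f \<Longrightarrow> periodic_int p (\<lambda>j. f (j + c))"
  unfolding periodic_int_def by (metis add.commute add.left_commute)

lemma periodic_int_add_mult:
  assumes "periodic_int p f" shows "f (j + q * p) = f j"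
proof -
  have nat_mult: "f (i + int n * p) = f i" for i n
  proof (induction n)
    case (Suc n)
    have "f (i + int (Suc n) * p) = f ((i + int n * p) + p)" by (simp add: algebra_simps)
    also have "\<dots> = f (i + int n * p)" by (rule periodic_intD[OF assms])
    finally show ?case using Suc.IH by simp
  qed simp
  show ?thesis
  proof (cases "q \<ge> 0")
    case True then show ?thesis using nat_mult[of j "nat q"] by simp
  next
    case False then show ?thesis using nat_mult[of "j + q * p" "nat (- q)"] by simp
  qed
qed

lemma periodic_int_mod: "periodic_int p f \<Longrightarrow> f (j mod p) = f j"
  using periodic_int_add_mult[of p f "j mod p" "j div p"] by simp

definition vec_of_int_fun :: "nat \<Rightarrow> (int \<Rightarrow> 'a) \<Rightarrow> 'a vec" where
  "vec_of_int_fun N f = vec N (\<lambda>i. f (int i))"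

lemma dim_vec_of_int_fun[simp]: "dim_vec (vec_of_int_fun N f) = N"
  by (simp add: vec_of_int_fun_def)

lemma vec_of_int_fun_carrier[simp]: "vec_of_int_fun N f \<in> carrier_vec N"
  by (simp add: vec_of_int_fun_def)

lemma dim_shiftK[simp]: "dim_row (shiftK N) = N" "dim_col (shiftK N) = N"
  by (simp_all add: shiftK_def)

lemma shiftK_carrier[simp]: "shiftK N \<in> carrier_mat N N"
  by (simp add: carrier_matI)

lemma transpose_shiftK_mult_vec:
  assumes N: "N > 0" and f: "periodic_int (int N) f"
  shows "transpose_mat (shiftK N) *\<^sub>v vec_of_int_fun N f = vec_of_int_fun N (\<lambda>j. f (j + 1))"
proof (rule eq_vecI)
  fix i assume "i < dim_vec (vec_of_int_fun N (\<lambda>j. f (j + 1)))"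
  then have i: "i < N" by simp
  have row: "i = (j + N - Suc 0) mod N \<longleftrightarrow> j = Suc i mod N" if j: "j < N" for j
    using i j by (cases "j = 0") (auto simp: mod_if Suc_diff_Suc)
  have "(transpose_mat (shiftK N) *\<^sub>v vec_of_int_fun N f) $ i
      = (\<Sum>j<N. (if i = (j + N - 1) mod N then 1 else 0) * f (int j))"
    using i by (simp add: scalar_prod_def shiftK_def vec_of_int_fun_def atLeast0LessThan)
  also have "\<dots> = (\<Sum>j<N. if j = Suc i mod N then f (int j) else 0)"
    by (rule sum.cong) (simp_all add: row)
  also have "\<dots> = f ((int i + 1) mod int N)"
    using N by (simp add: zmod_int add.commute)
  finally show "(transpose_mat (shiftK N) *\<^sub>v vec_of_int_fun N f) $ i
      = vec_of_int_fun N (\<lambda>j. f (j + 1)) $ i"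
    using i periodic_int_mod[OF f] by (simp add: vec_of_int_fun_def)
qed (simp add: shiftK_def)

lemma shiftK_mult_vec:
  assumes N: "N > 0" and f: "periodic_int (int N) f"
  shows "shiftK N *\<^sub>v vec_of_int_fun N f = vec_of_int_fun N (\<lambda>j. f (j - 1))"
proof (rule eq_vecI)
  fix i assume "i < dim_vec (vec_of_int_fun N (\<lambda>j. f (j - 1)))"
  then have i: "i < N" by simp
  have "(shiftK N *\<^sub>v vec_of_int_fun N f) $ i
      = (\<Sum>j<N. (if j = (i + N - 1) mod N then 1 else 0) * f (int j))"
    using i by (simp add: scalar_prod_def shiftK_def vec_of_int_fun_def atLeast0LessThan)
  also have "\<dots> = (\<Sum>j<N. if j = (i + N - 1) mod N then f (int j) else 0)"
    by (rule sum.cong) auto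
  also have "\<dots> = f ((int i - 1 + int N) mod int N)"
    using N by (simp add: zmod_int of_nat_diff algebra_simps)
  also have "\<dots> = f (int i - 1)"
    using periodic_int_mod[OF f] periodic_intD[OF f] by simp
  finally show "(shiftK N *\<^sub>v vec_of_int_fun N f) $ i = vec_of_int_fun N (\<lambda>j. f (j - 1)) $ i"
    using i by (simp add: vec_of_int_fun_def)
qed (simp add: shiftK_def)

lemma transpose_pow_mat_mult_vec_shift:
  fixes A :: "'a :: comm_semiring_1 mat"
  assumes A: "A \<in> carrier_mat N N"
    and step: "\<And>f. periodic_int (int N) f \<Longrightarrow>
      transpose_mat A *\<^sub>v vec_of_int_fun N f = vec_of_int_fun N (\<lambda>j. f (j + c))"
    and f: "periodic_int (int N) f"
  shows "transpose_mat (A ^\<^sub>m n) *\<^sub>v vec_of_int_fun N f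
    = vec_of_int_fun N (\<lambda>j. f (j + int n * c))"
proof (induction n)
  case 0
  show ?case using A by simp
next
  case (Suc n)
  have "transpose_mat (A ^\<^sub>m Suc n) = transpose_mat A * transpose_mat (A ^\<^sub>m n)"
    using A by (simp add: transpose_mult[of "A ^\<^sub>m n" N N A N])
  then have "transpose_mat (A ^\<^sub>m Suc n) *\<^sub>v vec_of_int_fun N f
      = transpose_mat A *\<^sub>v (transpose_mat (A ^\<^sub>m n) *\<^sub>v vec_of_int_fun N f)"
    using A by (simp add: assoc_mult_mat_vec[of _ N N _ N])
  also have "\<dots> = vec_of_int_fun N (\<lambda>j. f (j + c + int n * c))"
    using Suc.IH step[OF periodic_int_shift[OF f, of "int n * c"]] by simp
  finally show ?case by (simp add: algebra_simps)
qed

lemma Kpow_int_carrier[simp]: "Kpow_int N m \<in> carrier_mat N N"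
  by (simp add: Kpow_int_def)

lemma transpose_Kpow_int_mult_vec:
  assumes N: "N > 0" and f: "periodic_int (int N) f"
  shows "transpose_mat (Kpow_int N m) *\<^sub>v vec_of_int_fun N f = vec_of_int_fun N (\<lambda>j. f (j + m))"
proof (cases "m \<ge> 0")
  case True
  show ?thesis
    using transpose_pow_mat_mult_vec_shift[OF shiftK_carrier transpose_shiftK_mult_vec[OF N] f,
        of "nat m"] True
    by (simp add: Kpow_int_def)
next
  case False
  have "transpose_mat (transpose_mat (shiftK N)) *\<^sub>v vec_of_int_fun N g
      = vec_of_int_fun N (\<lambda>j. g (j + - 1))" if "periodic_int (int N) g" for g
    using shiftK_mult_vec[OF N that] by simp
  from transpose_pow_mat_mult_vec_shift[OF _ this f, of "nat (- m)"] False
  show ?thesis by (simp add: Kpow_int_def)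
qed

lemma smult_mat_mult_vec:
  "dim_vec v = dim_col A \<Longrightarrow> (c \<cdot>\<^sub>m A) *\<^sub>v v = c \<cdot>\<^sub>v (A *\<^sub>v v)"
  for A :: "'a :: comm_ring mat"
  by (intro eq_vecI) (auto simp: scalar_prod_def sum_distrib_left ac_simps)

lemma Knu_carrier[simp]: "Knu N t \<in> carrier_mat N N"
  by (simp add: Knu_def)

lemma transpose_Knu_mult_vec:
  assumes N: "N > 0" and f: "periodic_int (int N) f"
  shows "transpose_mat (Knu N t) *\<^sub>v vec_of_int_fun N f
    = vec_of_int_fun N (\<lambda>j. (1 - t) * f j + t * f (j + 1))"
proof -
  have "transpose_mat (Knu N t) = (1 - t) \<cdot>\<^sub>m 1\<^sub>m N + t \<cdot>\<^sub>m transpose_mat (shiftK N)"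
    by (rule eq_matI) (auto simp: Knu_def shiftK_def)
  then have "transpose_mat (Knu N t) *\<^sub>v vec_of_int_fun N f
      = (1 - t) \<cdot>\<^sub>v vec_of_int_fun N f + t \<cdot>\<^sub>v (transpose_mat (shiftK N) *\<^sub>v vec_of_int_fun N f)"
    by (simp add: add_mult_distrib_mat_vec[of _ N N] smult_mat_mult_vec)
  then show ?thesis
    using transpose_shiftK_mult_vec[OF N f] by (auto simp: vec_of_int_fun_def)
qed

definition lin_interp :: "(int \<Rightarrow> real) \<Rightarrow> real \<Rightarrow> real" where
  "lin_interp A x = (1 - frac x) * A \<lfloor>x\<rfloor> + frac x * A (\<lfloor>x\<rfloor> + 1)"

lemma transpose_calK_mult_vec:
  assumes N: "N > 0" and f: "periodic_int (int N) f"
  shows "transpose_mat (calK N x) *\<^sub>v vec_of_int_fun N f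
    = vec_of_int_fun N (\<lambda>j. lin_interp f (of_int j + x))"
proof -
  have "transpose_mat (calK N x) *\<^sub>v vec_of_int_fun N f
      = transpose_mat (Knu N (frac x)) *\<^sub>v
          (transpose_mat (Kpow_int N \<lfloor>x\<rfloor>) *\<^sub>v vec_of_int_fun N f)"
    by (simp add: calK_def frac_def transpose_mult[of _ N N _ N] assoc_mult_mat_vec[of _ N N _ N])
  also have "\<dots> = vec_of_int_fun N (\<lambda>j. (1 - frac x) * f (j + \<lfloor>x\<rfloor>) + frac x * f (j + 1 + \<lfloor>x\<rfloor>))"
    using transpose_Kpow_int_mult_vec[OF N f]
      transpose_Knu_mult_vec[OF N periodic_int_shift[OF f, of "\<lfloor>x\<rfloor>"]] by simp
  also have "\<dots> = vec_of_int_fun N (\<lambda>j. lin_interp f (of_int j + x))"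
    by (simp add: vec_of_int_fun_def lin_interp_def add_ac)
  finally show ?thesis .
qed

definition cyclic_ext :: "nat \<Rightarrow> 'a vec \<Rightarrow> int \<Rightarrow> 'a" where
  "cyclic_ext N a j = a $ nat (j mod int N)"

lemma periodic_int_cyclic_ext: "periodic_int (int N) (cyclic_ext N a)"
  by (simp add: periodic_int_def cyclic_ext_def)

lemma cyclic_ext_of_nat: "i < N \<Longrightarrow> cyclic_ext N a (int i) = a $ i"
  by (simp add: cyclic_ext_def zmod_int)

lemma vec_of_int_fun_cyclic_ext: "a \<in> carrier_vec N \<Longrightarrow> vec_of_int_fun N (cyclic_ext N a) = a"
  by (intro eq_vecI) (auto simp: vec_of_int_fun_def cyclic_ext_of_nat)

lemma gfun_eq_lin_interp:
  assumes N: "N > 0" and a: "a \<in> carrier_vec N"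
  shows "gfun N a b x = b - vec N (\<lambda>i. lin_interp (cyclic_ext N a) (of_nat i + x))"
proof -
  have "transpose_mat (calK N x) *\<^sub>v a
      = vec_of_int_fun N (\<lambda>j. lin_interp (cyclic_ext N a) (of_int j + x))"
    using transpose_calK_mult_vec[OF N periodic_int_cyclic_ext, of x a]
    by (simp add: vec_of_int_fun_cyclic_ext[OF a])
  then show ?thesis by (simp add: gfun_def vec_of_int_fun_def)
qed

lemma lin_interp_of_int_add:
  assumes "0 \<le> t" "t \<le> 1"
  shows "lin_interp A (of_int j + t) = (1 - t) * A j + t * A (j + 1)"
proof (cases "t = 1")
  case True
  then show ?thesis by (simp add: lin_interp_def flip: of_int_add)
next
  case False
  with assms have "\<lfloor>of_int j + t\<rfloor> = j" "frac (of_int j + t) = t"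
    by (simp_all add: floor_unique frac_def)
  then show ?thesis by (simp add: lin_interp_def)
qed

lemma lin_interp_of_int[simp]: "lin_interp A (of_int j) = A j"
  using lin_interp_of_int_add[of 0 A j] by simp

lemma lin_interp_add_of_int:
  assumes "periodic_int p A" shows "lin_interp A (x + of_int p) = lin_interp A x"
proof -
  have "A (\<lfloor>x\<rfloor> + p + 1) = A (\<lfloor>x\<rfloor> + 1)"
    using periodic_intD[OF assms, of "\<lfloor>x\<rfloor> + 1"] by (simp add: add_ac)
  then show ?thesis by (simp add: lin_interp_def frac_def periodic_intD[OF assms])
qed

lemma lin_interp_period_of_int_iff:
  "(\<forall>x. lin_interp A (x + of_int p) = lin_interp A x) \<longleftrightarrow> periodic_int p A"
  by (metis lin_interp_add_of_int lin_interp_of_int of_int_add periodic_int_def)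

lemma second_difference_eq_0_if_lin_interp_period_not_int:
  assumes per: "\<And>x. lin_interp A (x + L) = lin_interp A x" and L: "L \<notin> \<int>"
  shows "A (i + 2) - A (i + 1) = A (i + 1) - A i"
proof -
  define s where "s = frac L"
  define p where "p = \<lfloor>L\<rfloor>"
  have s: "0 < s" "s < 1" using L frac_lt_1 by (simp_all add: s_def)
  have L_eq: "L = of_int p + s" by (simp add: s_def p_def frac_def)
  have E1: "A (j - p) = (1 - s) * A j + s * A (j + 1)" for j
  proof -
    have "A (j - p) = lin_interp A (of_int (j - p) + L)" by (simp only: per lin_interp_of_int)
    also have "\<dots> = lin_interp A (of_int j + s)" by (simp add: L_eq)
    finally show ?thesis using lin_interp_of_int_add[of s A j] s by simp
  qed
  have E2: "A (j + 1) = s * A (j - p) + (1 - s) * A (j + 1 - p)" for j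
  proof -
    have "of_int (j + 1) = (of_int (j - p) + (1 - s)) + L" by (simp add: L_eq)
    then have "A (j + 1) = lin_interp A (of_int (j - p) + (1 - s))"
      by (metis per lin_interp_of_int)
    then show ?thesis using lin_interp_of_int_add[of "1 - s" A "j - p"] s
      by (simp add: algebra_simps)
  qed
  \<comment> \<open>eliminating \<open>A (i - p)\<close> and \<open>A (i + 1 - p)\<close> via \<open>E1\<close> leaves \<open>s (1 - s)\<close> times
    the second difference\<close>
  have "A (i + 1) = s * ((1 - s) * A i + s * A (i + 1)) + (1 - s) * ((1 - s) * A (i + 1) + s * A (i + 2))"
    using E2[of i] E1[of i] E1[of "i + 1"] by (simp add: add.assoc)
  then have "s * (1 - s) * ((A (i + 2) - A (i + 1)) - (A (i + 1) - A i)) = 0"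
    by (simp add: algebra_simps)
  with s show ?thesis by simp
qed

lemma periodic_int_const_if_second_difference_eq_0:
  fixes A :: "int \<Rightarrow> real"
  assumes N: "N > 0" and per: "periodic_int (int N) A"
    and diff: "\<And>i. A (i + 2) - A (i + 1) = A (i + 1) - A i"
  shows "A j = A 0"
proof -
  define d where "d = A 1 - A 0"
  have step: "A (int n + 1) - A (int n) = d" for n
  proof (induction n)
    case (Suc n)
    then show ?case using diff[of "int n"] by (simp add: algebra_simps)
  qed (simp add: d_def)
  have lin: "A (int n) = A 0 + real n * d" for n
    by (induction n) (use step in \<open>simp_all add: algebra_simps\<close>)
  have "A (int N) = A 0" using periodic_intD[OF per, of 0] by simp
  with lin[of N] N have "d = 0" by simp
  have "A j = A (int (nat (j mod int N)))" using periodic_int_mod[OF per, of j] N by simp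
  also have "\<dots> = A 0"
    using lin[of "nat (j mod int N)"] \<open>d = 0\<close> by (simp only: mult_zero_right add_0_right)
  finally show ?thesis .
qed

definition unit_root :: "nat \<Rightarrow> int \<Rightarrow> complex" where
  "unit_root N m = cis (2 * pi * of_int m / real N)"

lemma unit_root_add: "unit_root N (m + n) = unit_root N m * unit_root N n"
  by (simp add: unit_root_def cis_mult add_divide_distrib algebra_simps)

lemma unit_root_pow: "unit_root N m ^ k = unit_root N (int k * m)"
  by (simp add: unit_root_def DeMoivre algebra_simps)

lemma cnj_unit_root: "cnj (unit_root N m) = unit_root N (- m)"
  by (simp add: unit_root_def cis_cnj)

lemma unit_root_eq_1_iff:
  assumes N: "N > 0" shows "unit_root N m = 1 \<longleftrightarrow> int N dvd m"
proof
  assume "unit_root N m = 1"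
  then have "cos (2 * pi * of_int m / real N) = 1"
    unfolding unit_root_def by (metis cis.sel(1) one_complex.sel(1))
  then obtain n :: int where "2 * pi * of_int m / real N = of_int n * 2 * pi"
    using cos_one_2pi_int by blast
  with N have "of_int m = of_int n * real N" by (simp add: field_simps)
  then have "m = n * int N" by (metis of_int_eq_iff of_int_mult of_int_of_nat_eq)
  then show "int N dvd m" by simp
next
  assume "int N dvd m"
  then obtain q where "m = int N * q" by blast
  with N have "2 * pi * of_int m / real N = 2 * pi * of_int q" by simp
  then show "unit_root N m = 1" by (simp add: unit_root_def)
qed

lemma unit_root_add_mult: "N > 0 \<Longrightarrow> unit_root N (m + int N * q) = unit_root N m"
  by (simp add: unit_root_add unit_root_eq_1_iff)

lemma sum_unit_root:
  assumes N: "N > 0"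
  shows "(\<Sum>k<N. unit_root N (int k * m)) = (if int N dvd m then of_nat N else 0)"
proof (cases "int N dvd m")
  case True
  then have "unit_root N (int k * m) = 1" for k by (simp add: unit_root_eq_1_iff[OF N])
  with True show ?thesis by simp
next
  case False
  then have "unit_root N m \<noteq> 1" by (simp add: unit_root_eq_1_iff[OF N])
  moreover have "unit_root N m ^ N = 1" by (simp add: unit_root_pow unit_root_eq_1_iff[OF N])
  ultimately show ?thesis
    using False geometric_sum[of "unit_root N m" N] by (simp add: unit_root_pow)
qed

definition dft :: "nat \<Rightarrow> (int \<Rightarrow> real) \<Rightarrow> nat \<Rightarrow> complex" where
  "dft N A k = (\<Sum>n<N. complex_of_real (A (int n)) * unit_root N (- (int k * int n)))"

lemma DFT_eq_dft: "DFT N a k = dft N (cyclic_ext N a) k"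
  unfolding DFT_def dft_def
proof (rule sum.cong)
  fix n assume "n \<in> {..<N}"
  moreover have "exp (- 2 * complex_of_real pi * \<i> * of_nat k * of_nat n / of_nat N)
      = exp (\<i> * complex_of_real (2 * pi * of_int (- (int k * int n)) / real N))"
    by (rule arg_cong[where f = exp]) (simp add: field_simps)
  ultimately show "complex_of_real (a $ n) * exp (- 2 * complex_of_real pi * \<i> * of_nat k * of_nat n / of_nat N)
      = complex_of_real (cyclic_ext N a (int n)) * unit_root N (- (int k * int n))"
    by (simp add: unit_root_def cis_conv_exp cyclic_ext_of_nat)
qed simp

lemma dft_inversion:
  assumes N: "N > 0" and j: "j < N"
  shows "(\<Sum>k<N. dft N A k * unit_root N (int k * int j)) = of_nat N * complex_of_real (A (int j))"
proof -
  have orth: "(\<Sum>k<N. unit_root N (int k * (int j - int n))) = (if n = j then of_nat N else 0)"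
    if n: "n < N" for n
  proof -
    have "int N dvd int j - int n \<longleftrightarrow> int j mod int N = int n mod int N"
      by (simp add: mod_eq_dvd_iff)
    also have "\<dots> \<longleftrightarrow> n = j" using n j by (auto simp: zmod_int)
    finally show ?thesis by (simp add: sum_unit_root[OF N])
  qed
  have "(\<Sum>k<N. dft N A k * unit_root N (int k * int j))
      = (\<Sum>k<N. \<Sum>n<N. complex_of_real (A (int n)) * unit_root N (int k * (int j - int n)))"
    unfolding dft_def sum_distrib_right
    by (intro sum.cong refl) (simp add: mult.assoc flip: unit_root_add, simp add: algebra_simps)
  also have "\<dots> = (\<Sum>n<N. complex_of_real (A (int n)) * (\<Sum>k<N. unit_root N (int k * (int j - int n))))"
    by (subst sum.swap) (simp add: sum_distrib_left)
  also have "\<dots> = (\<Sum>n<N. if n = j then of_nat N * complex_of_real (A (int j)) else 0)"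
    by (intro sum.cong refl) (simp add: orth)
  also have "\<dots> = of_nat N * complex_of_real (A (int j))"
    using j by simp
  finally show ?thesis .
qed

lemma dft_inject:
  assumes N: "N > 0" and A: "periodic_int (int N) A" and B: "periodic_int (int N) B"
    and eq: "\<And>k. k < N \<Longrightarrow> dft N A k = dft N B k"
  shows "A = B"
proof
  fix j
  have "A (int i) = B (int i)" if i: "i < N" for i
    using dft_inversion[OF N i, of A] dft_inversion[OF N i, of B] N by (simp add: eq)
  then have "A (j mod int N) = B (j mod int N)"
    using N by (metis nat_less_iff pos_mod_bound pos_mod_sign of_nat_0_less_iff int_nat_eq)
  then show "A j = B j" by (simp add: periodic_int_mod[OF A] periodic_int_mod[OF B])
qed

lemma sum_lessThan_shift_periodic:
  fixes h :: "int \<Rightarrow> 'a :: cancel_comm_monoid_add"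
  assumes h: "periodic_int (int N) h"
  shows "(\<Sum>n<N. h (int n + int p)) = (\<Sum>n<N. h (int n))"
proof -
  have shift1: "(\<Sum>n<N. g (int n + 1)) = (\<Sum>n<N. g (int n))"
    if g: "periodic_int (int N) g" for g :: "int \<Rightarrow> 'a"
  proof -
    have "g 0 + (\<Sum>n<N. g (int n + 1)) = (\<Sum>n<Suc N. g (int n))"
      by (subst sum.lessThan_Suc_shift) (simp add: add.commute)
    also have "\<dots> = (\<Sum>n<N. g (int n)) + g 0"
      using periodic_intD[OF g, of 0] by simp
    finally show ?thesis by (simp add: add.commute)
  qed
  show ?thesis
  proof (induction p)
    case (Suc p)
    have "(\<Sum>n<N. h (int n + int (Suc p))) = (\<Sum>n<N. h (int n + 1 + int p))"
      by (simp add: add_ac)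
    also have "\<dots> = (\<Sum>n<N. h (int n + int p))"
      using shift1[OF periodic_int_shift[OF h, of "int p"]] by simp
    finally show ?case using Suc.IH by simp
  qed simp
qed

lemma dft_shift:
  assumes N: "N > 0" and A: "periodic_int (int N) A"
  shows "dft N (\<lambda>j. A (j + int p)) k = unit_root N (int k * int p) * dft N A k"
proof -
  define h where "h n = complex_of_real (A n) * unit_root N (- (int k * (n - int p)))" for n
  have h: "periodic_int (int N) h"
    using periodic_intD[OF A] unit_root_add_mult[OF N, of "- (int k * (_ - int p))" "- int k"]
    by (simp add: periodic_int_def h_def algebra_simps)
  have "dft N (\<lambda>j. A (j + int p)) k = (\<Sum>n<N. h (int n + int p))"
    by (simp add: dft_def h_def)
  also have "\<dots> = (\<Sum>n<N. h (int n))"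
    by (rule sum_lessThan_shift_periodic[OF h])
  also have "\<dots> = unit_root N (int k * int p) * dft N A k"
    unfolding dft_def h_def sum_distrib_left
    by (intro sum.cong refl) (simp add: algebra_simps flip: unit_root_add)
  finally show ?thesis .
qed

definition dft_support :: "nat \<Rightarrow> (int \<Rightarrow> real) \<Rightarrow> nat set" where
  "dft_support N A = {k. 0 < k \<and> k < N \<and> dft N A k \<noteq> 0}"

lemma supp_DFT_minus_0: "supp_DFT N a - {0} = dft_support N (cyclic_ext N a)"
  by (auto simp: supp_DFT_def dft_support_def DFT_eq_dft)

lemma periodic_int_iff_dvd_dft_support:
  assumes N: "N > 0" and A: "periodic_int (int N) A"
  shows "periodic_int (int p) A \<longleftrightarrow> (\<forall>k\<in>dft_support N A. N dvd k * p)"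
proof -
  have shift_eq_iff: "dft N (\<lambda>j. A (j + int p)) k = dft N A k \<longleftrightarrow> dft N A k = 0 \<or> N dvd k * p"
    for k
    using dft_shift[OF N A, of p k] unit_root_eq_1_iff[OF N, of "int k * int p"]
    by (auto simp flip: of_nat_mult simp: of_nat_dvd_iff)
  show ?thesis
  proof
    assume "periodic_int (int p) A"
    then have "(\<lambda>j. A (j + int p)) = A" by (simp add: periodic_int_def)
    then show "\<forall>k\<in>dft_support N A. N dvd k * p"
      using shift_eq_iff by (auto simp: dft_support_def)
  next
    assume "\<forall>k\<in>dft_support N A. N dvd k * p"
    then have "dft N (\<lambda>j. A (j + int p)) k = dft N A k" if "k < N" for k
      using that shift_eq_iff[of k] by (cases "k = 0") (auto simp: dft_support_def)
    then have "(\<lambda>j. A (j + int p)) = A"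
      using dft_inject[OF N periodic_int_shift[OF A] A] by blast
    then show "periodic_int (int p) A" by (simp add: periodic_int_def fun_eq_iff)
  qed
qed

lemma dft_support_nonempty:
  assumes N: "N > 0" and A: "periodic_int (int N) A" and nonconst: "A j \<noteq> A 0"
  shows "dft_support N A \<noteq> {}"
proof
  assume "dft_support N A = {}"
  then have "periodic_int 1 A"
    using periodic_int_iff_dvd_dft_support[OF N A, of 1] by simp
  then have "A (0 + j * 1) = A 0" by (rule periodic_int_add_mult)
  with nonconst show False by simp
qed

lemma dft_support_sym:
  assumes N: "N > 0" and k: "k \<in> dft_support N A"
  shows "N - k \<in> dft_support N A"
proof -
  have k: "0 < k" "k < N" "dft N A k \<noteq> 0" using k by (auto simp: dft_support_def)
  have "unit_root N (- (int (N - k) * int n)) = unit_root N (int k * int n)" for n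
    using unit_root_add_mult[OF N, of "int k * int n" "- int n"] k
    by (simp add: algebra_simps)
  then have "dft N A (N - k) = cnj (dft N A k)"
    by (simp add: dft_def cnj_unit_root)
  with k show ?thesis by (simp add: dft_support_def)
qed

lemma Gcd_dft_support:
  assumes N: "N > 0" and ne: "dft_support N A \<noteq> {}"
  shows "0 < Gcd (dft_support N A)" "Gcd (dft_support N A) dvd N"
proof -
  obtain k where k: "k \<in> dft_support N A" using ne by blast
  then have "0 < k" "k < N" by (auto simp: dft_support_def)
  show "0 < Gcd (dft_support N A)"
  proof (rule gr0I)
    assume "Gcd (dft_support N A) = 0"
    with k have "k = 0" by (auto simp: Gcd_0_iff)
    with \<open>0 < k\<close> show False by simp
  qed
  have "Gcd (dft_support N A) dvd k + (N - k)"
    using k dft_support_sym[OF N k] by (simp add: Gcd_dvd)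
  with \<open>k < N\<close> show "Gcd (dft_support N A) dvd N" by simp
qed

lemma dvd_mult_all_iff_div_Gcd_dvd:
  fixes S :: "nat set"
  assumes G: "0 < Gcd S" "Gcd S dvd N"
  shows "(\<forall>k\<in>S. N dvd k * p) \<longleftrightarrow> N div Gcd S dvd p"
proof
  assume "\<forall>k\<in>S. N dvd k * p"
  then have "N dvd Gcd ((*) p ` S)" by (auto intro!: Gcd_greatest simp: mult.commute)
  also have "Gcd ((*) p ` S) = p * Gcd S" by (simp add: Gcd_mult)
  finally have "N dvd Gcd S * p" by (simp add: mult.commute)
  with G show "N div Gcd S dvd p" using div_dvd_div[of "Gcd S" N "Gcd S * p"] by simp
next
  assume "N div Gcd S dvd p"
  then obtain m where m: "p = N div Gcd S * m" by blast
  show "\<forall>k\<in>S. N dvd k * p"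
  proof
    fix k assume "k \<in> S"
    then obtain k' where "k = Gcd S * k'" using Gcd_dvd by blast
    with m have "k * p = (k' * m) * (Gcd S * (N div Gcd S))" by (simp add: ac_simps)
    with G show "N dvd k * p" by simp
  qed
qed

lemma least_period_lin_interp:
  assumes N: "N > 0" and A: "periodic_int (int N) A" and nonconst: "A j \<noteq> A 0"
    and P: "P > 0" and periods: "\<And>p. periodic_int (int p) A \<longleftrightarrow> P dvd p"
  shows "least_period (lin_interp A) (real P)"
  unfolding least_period_def
proof (intro conjI allI impI)
  show "0 < real P" using P by simp
  show "lin_interp A (x + real P) = lin_interp A x" for x
    using lin_interp_add_of_int[of "int P" A x] periods[of P] by simp
next
  fix L assume "0 < L \<and> (\<forall>x. lin_interp A (x + L) = lin_interp A x)"
  then have L: "0 < L" and per: "\<And>x. lin_interp A (x + L) = lin_interp A x" by auto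
  have "L \<in> \<int>"
  proof (rule ccontr)
    assume "L \<notin> \<int>"
    then have "A j = A 0"
      using periodic_int_const_if_second_difference_eq_0[OF N A]
        second_difference_eq_0_if_lin_interp_period_not_int[OF per] by blast
    with nonconst show False ..
  qed
  then obtain m where "L = of_int m" by (auto elim: Ints_cases)
  with L obtain p :: nat where p: "L = real p"
    by (metis of_int_of_nat_eq zero_less_imp_eq_int of_int_0_less_iff)
  then have "periodic_int (int p) A"
    using per lin_interp_period_of_int_iff[of A "int p"] by simp
  then have "P dvd p" by (simp add: periods)
  with L p show "real P \<le> L" by (simp add: dvd_imp_le)
qed

lemma cyclic_ext_nonconst:
  assumes a: "a \<in> carrier_vec N" and "\<not> parallel_to_ones N a"
  shows "\<exists>j. cyclic_ext N a j \<noteq> cyclic_ext N a 0"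
proof (rule ccontr)
  assume const: "\<nexists>j. cyclic_ext N a j \<noteq> cyclic_ext N a 0"
  have "a $ i = cyclic_ext N a 0" if "i < N" for i
  proof -
    have "cyclic_ext N a (int i) = cyclic_ext N a 0" using const by blast
    then show ?thesis by (simp add: cyclic_ext_of_nat[OF that])
  qed
  then have "a = cyclic_ext N a 0 \<cdot>\<^sub>v vec N (\<lambda>_. 1)"
    using a by (intro eq_vecI) auto
  with assms(2) show False by (auto simp: parallel_to_ones_def)
qed

lemma least_period_gfun_iff:
  assumes N: "N > 0" and a: "a \<in> carrier_vec N"
  shows "least_period (gfun N a b) L \<longleftrightarrow> least_period (lin_interp (cyclic_ext N a)) L"
proof -
  have "(\<forall>x. gfun N a b (x + T) = gfun N a b x)
      \<longleftrightarrow> (\<forall>x. lin_interp (cyclic_ext N a) (x + T) = lin_interp (cyclic_ext N a) x)" for T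
  proof
    assume "\<forall>x. gfun N a b (x + T) = gfun N a b x"
    then have "gfun N a b (x + T) $ 0 = gfun N a b x $ 0" for x by simp
    with N show "\<forall>x. lin_interp (cyclic_ext N a) (x + T) = lin_interp (cyclic_ext N a) x"
      by (simp add: gfun_eq_lin_interp[OF N a])
  next
    assume "\<forall>x. lin_interp (cyclic_ext N a) (x + T) = lin_interp (cyclic_ext N a) x"
    then show "\<forall>x. gfun N a b (x + T) = gfun N a b x"
      by (simp add: gfun_eq_lin_interp[OF N a] flip: add.assoc)
  qed
  then show ?thesis by (simp add: least_period_def)
qed

theorem proposition4p1:
  fixes N :: nat and a b :: "real vec"
  assumes "N \<ge> 2"
    and "a \<in> carrier_vec N" and "b \<in> carrier_vec N"
    and "\<not> parallel_to_ones N a" and "\<not> parallel_to_ones N b"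
  shows "least_period (gfun N a b)
           (real N / real (Gcd (supp_DFT N a - {0})))"
proof -
  have N: "N > 0" using assms(1) by simp
  define A where "A = cyclic_ext N a"
  define G where "G = Gcd (dft_support N A)"
  have A: "periodic_int (int N) A" by (simp add: A_def periodic_int_cyclic_ext)
  obtain j where nonconst: "A j \<noteq> A 0"
    using cyclic_ext_nonconst[OF assms(2,4)] unfolding A_def by blast
  have G: "0 < G" "G dvd N"
    using Gcd_dft_support[OF N dft_support_nonempty[OF N A nonconst]] by (simp_all add: G_def)
  have periods: "periodic_int (int p) A \<longleftrightarrow> N div G dvd p" for p
    using periodic_int_iff_dvd_dft_support[OF N A] dvd_mult_all_iff_div_Gcd_dvd[OF G[unfolded G_def]]
    by (simp add: G_def)
  have "least_period (lin_interp A) (real (N div G))"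
    using least_period_lin_interp[OF N A nonconst _ periods] N G
    by (simp add: div_greater_zero_iff dvd_imp_le)
  moreover have "real (N div G) = real N / real G" using G by (simp add: real_of_nat_div)
  ultimately show ?thesis
    by (simp add: least_period_gfun_iff[OF N assms(2)] supp_DFT_minus_0 A_def G_def)
qed

end
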